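(* In classical propositional logic over a set $X$ of propositional variables, let $X',X''$ be a disjoint cover of $X$, and let $\Sigma\subseteq\Pi X$ be a set of models which is definable by a (possibly infinite) theory, i.e. $\Sigma=M(T)$ for some set $T$ of formulas. Then $\Gamma:=\Sigma\upharpoonright X'\times\Pi X''$ (the set of models $\sigma$ such that some $\tau\in\Sigma$ agrees with $\sigma$ on $X'$) is also definable by a theory.
   Context: Models are identified with sequences: $\Pi X$ is the set of all assignments $X\to\{\mathrm{TRUE},\mathrm{FALSE}\}$; $M(T)$ is the set of models of $T$; $\Sigma\upharpoonright X'$ is the set of restrictions to $X'$ of elements of $\Sigma$. *)

theory Defs
  imports Main
begin

datatype 'v form = Var 'v | FFalse | FTrue | Neg "'v form"
  | Conj "'v form" "'v form" | Disj "'v form" "'v form" | Imp "'v form" "'v form"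

fun vars :: "'v form \<Rightarrow> 'v set" where
  "vars (Var v) = {v}"
| "vars FFalse = {}"
| "vars FTrue = {}"
| "vars (Neg p) = vars p"
| "vars (Conj p q) = vars p \<union> vars q"
| "vars (Disj p q) = vars p \<union> vars q"
| "vars (Imp p q) = vars p \<union> vars q"

fun eval :: "('v \<Rightarrow> bool) \<Rightarrow> 'v form \<Rightarrow> bool" where
  "eval m (Var v) = m v"
| "eval m FFalse = False"
| "eval m FTrue = True"
| "eval m (Neg p) = (\<not> eval m p)"
| "eval m (Conj p q) = (eval m p \<and> eval m q)"
| "eval m (Disj p q) = (eval m p \<or> eval m q)"
| "eval m (Imp p q) = (eval m p \<longrightarrow> eval m q)"

definition formulas :: "'v set \<Rightarrow> 'v form set" where
  "formulas X = {\<phi>. vars \<phi> \<subseteq> X}"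

text \<open>\<Pi>X: all assignments X \<rightarrow> {TRUE,FALSE}, represented canonically as total
  functions that are False outside X.\<close>
definition PiX :: "'v set \<Rightarrow> ('v \<Rightarrow> bool) set" where
  "PiX X = {m. \<forall>v. v \<notin> X \<longrightarrow> m v = False}"

definition models :: "'v set \<Rightarrow> 'v form set \<Rightarrow> ('v \<Rightarrow> bool) set" where
  "models X T = {m \<in> PiX X. \<forall>\<phi>\<in>T. eval m \<phi>}"

definition restr :: "('v \<Rightarrow> bool) \<Rightarrow> 'v set \<Rightarrow> ('v \<Rightarrow> bool)" where
  "restr m X' = (\<lambda>v. v \<in> X' \<and> m v)"

definition restr_set :: "('v \<Rightarrow> bool) set \<Rightarrow> 'v set \<Rightarrow> ('v \<Rightarrow> bool) set" where
  "restr_set S X' = (\<lambda>m. restr m X') ` S"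

text \<open>A \<times> B for A \<subseteq> \<Pi>X', B \<subseteq> \<Pi>X'' with X', X'' disjoint, identified with
  the set of assignments on X' \<union> X'' whose restrictions lie in A and B.\<close>
definition prod_set :: "('v \<Rightarrow> bool) set \<Rightarrow> 'v set \<Rightarrow> ('v \<Rightarrow> bool) set \<Rightarrow> 'v set
    \<Rightarrow> ('v \<Rightarrow> bool) set" where
  "prod_set A X' B X'' = {m \<in> PiX (X' \<union> X''). restr m X' \<in> A \<and> restr m X'' \<in> B}"

end

theory Submission
  imports Defs "HOL-Analysis.Analysis"
begin

text \<open>The theory defining \<Gamma> is the set of all formulas over X' that hold throughout \<Sigma>.
  If m satisfies them, then for each finite set V \<subseteq> X' the negated conjunction of the
  literals of m on V is not among them, so some model of \<Sigma> agrees with m on V.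
  Together with T and the literals of m on X', this makes a finitely satisfiable theory;
  by compactness it has a model, which lies in \<Sigma> and agrees with m on X'.\<close>

abbreviation assignment_topology :: "('v \<Rightarrow> bool) topology" where
  "assignment_topology \<equiv> product_topology (\<lambda>_. discrete_topology (UNIV::bool set)) UNIV"

lemma openin_eval:
  "openin assignment_topology {m. eval m \<phi>} \<and> openin assignment_topology {m. \<not> eval m \<phi>}"
proof (induction \<phi>)
  case (Var v)
  have proj: "continuous_map assignment_topology (discrete_topology UNIV) (\<lambda>m. m v)"
    by (rule continuous_map_product_projection) simp
  have "openin assignment_topology {m \<in> topspace assignment_topology. m v \<in> {b}}" for b
    by (rule openin_continuous_map_preimage[OF proj]) simp
  from this[of True] this[of False] show ?case by simp
next
  case (Conj p q)
  have "{m. eval m (Conj p q)} = {m. eval m p} \<inter> {m. eval m q}"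
       "{m. \<not> eval m (Conj p q)} = {m. \<not> eval m p} \<union> {m. \<not> eval m q}" by auto
  with Conj show ?case by (simp add: openin_Int openin_Un)
next
  case (Disj p q)
  have "{m. eval m (Disj p q)} = {m. eval m p} \<union> {m. eval m q}"
       "{m. \<not> eval m (Disj p q)} = {m. \<not> eval m p} \<inter> {m. \<not> eval m q}" by auto
  with Disj show ?case by (simp add: openin_Int openin_Un)
next
  case (Imp p q)
  have "{m. eval m (Imp p q)} = {m. \<not> eval m p} \<union> {m. eval m q}"
       "{m. \<not> eval m (Imp p q)} = {m. eval m p} \<inter> {m. \<not> eval m q}" by auto
  with Imp show ?case by (simp add: openin_Int openin_Un)
qed (use openin_topspace[of assignment_topology] in auto)

lemma closedin_eval: "closedin assignment_topology {m. eval m \<phi>}"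
proof -
  have "topspace assignment_topology - {m. eval m \<phi>} = {m. \<not> eval m \<phi>}" by auto
  then show ?thesis using openin_eval[of \<phi>] by (simp add: closedin_def)
qed

theorem compactness:
  assumes "\<And>F. finite F \<Longrightarrow> F \<subseteq> S \<Longrightarrow> \<exists>m. \<forall>\<phi>\<in>F. eval m \<phi>"
  shows "\<exists>m. \<forall>\<phi>\<in>S. eval m \<phi>"
proof -
  have compact: "compact_space assignment_topology"
    by (simp add: compact_space_product_topology compact_space_discrete_topology)
  let ?U = "(\<lambda>\<phi>. {m. eval m \<phi>}) ` S"
  have "\<Inter>?U \<noteq> {}"
  proof (rule compact[unfolded compact_space_fip, rule_format], intro conjI allI impI)
    show "\<forall>C\<in>?U. closedin assignment_topology C" using closedin_eval by blast
  next
    fix \<F> assume "finite \<F> \<and> \<F> \<subseteq> ?U"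
    then obtain F where "F \<subseteq> S" "finite F" "\<F> = (\<lambda>\<phi>. {m. eval m \<phi>}) ` F"
      by (meson finite_subset_image)
    with assms obtain m where "\<forall>\<phi>\<in>F. eval m \<phi>" by blast
    with \<open>\<F> = _\<close> show "\<Inter>\<F> \<noteq> {}" by auto
  qed
  then show ?thesis by auto
qed

lemma eval_cong: "(\<And>v. v \<in> vars \<phi> \<Longrightarrow> m v = m' v) \<Longrightarrow> eval m \<phi> = eval m' \<phi>"
  by (induction \<phi>) auto

fun conjs :: "'v form list \<Rightarrow> 'v form" where
  "conjs [] = FTrue"
| "conjs (\<phi> # \<phi>s) = Conj \<phi> (conjs \<phi>s)"

lemma eval_conjs: "eval m (conjs \<phi>s) = (\<forall>\<phi>\<in>set \<phi>s. eval m \<phi>)"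
  by (induction \<phi>s) auto

lemma vars_conjs: "vars (conjs \<phi>s) = (\<Union>\<phi>\<in>set \<phi>s. vars \<phi>)"
  by (induction \<phi>s) auto

definition lit :: "('v \<Rightarrow> bool) \<Rightarrow> 'v \<Rightarrow> 'v form" where
  "lit m v = (if m v then Var v else Neg (Var v))"

lemma eval_lit [simp]: "eval t (lit m v) = (t v = m v)"
  by (simp add: lit_def)

lemma vars_lit [simp]: "vars (lit m v) = {v}"
  by (simp add: lit_def)

lemma inj_lit: "inj (lit m)"
  by (auto simp: inj_on_def lit_def split: if_splits)

definition valid_over :: "('v \<Rightarrow> bool) set \<Rightarrow> 'v set \<Rightarrow> 'v form set" where
  "valid_over S Y = {\<phi> \<in> formulas Y. \<forall>\<tau>\<in>S. eval \<tau> \<phi>}"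

lemma agree_finite_if_sat_valid_over:
  assumes "\<forall>\<phi>\<in>valid_over S Y. eval m \<phi>" and "finite V" and "V \<subseteq> Y"
  shows "\<exists>\<tau>\<in>S. \<forall>v\<in>V. \<tau> v = m v"
proof -
  obtain vs where vs: "set vs = V" using finite_list[OF \<open>finite V\<close>] by blast
  define \<psi> where "\<psi> = Neg (conjs (map (lit m) vs))"
  have "\<psi> \<in> formulas Y" using \<open>V \<subseteq> Y\<close> by (auto simp: \<psi>_def formulas_def vars_conjs vs)
  moreover have "\<not> eval m \<psi>" by (simp add: \<psi>_def eval_conjs)
  ultimately obtain \<tau> where "\<tau> \<in> S" "\<not> eval \<tau> \<psi>"
    using assms(1) by (auto simp: valid_over_def)
  then show ?thesis by (auto simp: \<psi>_def eval_conjs vs)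
qed

lemma agree_if_sat_valid_over_models:
  assumes sat: "\<forall>\<phi>\<in>valid_over (models X T) Y. eval m \<phi>"
  shows "\<exists>\<tau>\<in>models X T. \<forall>v\<in>Y. \<tau> v = m v"
proof -
  \<comment> \<open>The negated variables outside X force a model of S into \<open>PiX X\<close>.\<close>
  define S where "S = T \<union> lit m ` Y \<union> (\<lambda>v. Neg (Var v)) ` (- X)"
  have "\<exists>\<tau>. \<forall>\<phi>\<in>S. eval \<tau> \<phi>"
  proof (rule compactness)
    fix F assume F: "finite F" "F \<subseteq> S"
    define V where "V = {v \<in> Y. lit m v \<in> F}"
    have "finite V"
      using F(1) finite_vimageI[OF _ inj_lit] by (auto simp: V_def intro: finite_subset)
    moreover have "V \<subseteq> Y" by (auto simp: V_def)
    ultimately obtain \<tau> where \<tau>: "\<tau> \<in> models X T" "\<forall>v\<in>V. \<tau> v = m v"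
      using agree_finite_if_sat_valid_over[OF sat] by blast
    have "eval \<tau> \<phi>" if "\<phi> \<in> F" for \<phi>
      using that F(2) \<tau> by (auto simp: S_def V_def models_def PiX_def)
    then show "\<exists>\<tau>. \<forall>\<phi>\<in>F. eval \<tau> \<phi>" by blast
  qed
  then obtain \<tau> where \<tau>: "\<forall>\<phi>\<in>S. eval \<tau> \<phi>" by blast
  have "\<tau> v = False" if "v \<notin> X" for v
    using \<tau>[rule_format, of "Neg (Var v)"] that by (simp add: S_def)
  with \<tau> have "\<tau> \<in> models X T" by (simp add: models_def PiX_def S_def)
  moreover have "\<tau> v = m v" if "v \<in> Y" for v
    using \<tau>[rule_format, of "lit m v"] that by (simp add: S_def)
  ultimately show ?thesis by blast
qed

lemma models_valid_over:
  "models X (valid_over (models X T) Y) = {m \<in> PiX X. \<exists>\<tau>\<in>models X T. \<forall>v\<in>Y. m v = \<tau> v}"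
proof (intro set_eqI iffI)
  fix m assume "m \<in> models X (valid_over (models X T) Y)"
  then have "m \<in> PiX X" "\<forall>\<phi>\<in>valid_over (models X T) Y. eval m \<phi>"
    unfolding models_def[of X "valid_over _ _"] by auto
  then show "m \<in> {m \<in> PiX X. \<exists>\<tau>\<in>models X T. \<forall>v\<in>Y. m v = \<tau> v}"
    using agree_if_sat_valid_over_models[of X T Y m] by auto
next
  fix m assume "m \<in> {m \<in> PiX X. \<exists>\<tau>\<in>models X T. \<forall>v\<in>Y. m v = \<tau> v}"
  then obtain \<tau> where m: "m \<in> PiX X" and \<tau>: "\<tau> \<in> models X T" "\<forall>v\<in>Y. m v = \<tau> v" by blast
  have "eval m \<phi>" if "\<phi> \<in> valid_over (models X T) Y" for \<phi>
    using that \<tau> eval_cong[of \<phi> m \<tau>] by (auto simp: valid_over_def formulas_def)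
  with m show "m \<in> models X (valid_over (models X T) Y)"
    unfolding models_def[of X "valid_over _ _"] by blast
qed

lemma restr_eq_iff: "restr m Y = restr \<tau> Y \<longleftrightarrow> (\<forall>v\<in>Y. m v = \<tau> v)"
  by (auto simp: restr_def fun_eq_iff)

lemma prod_set_restr_set_PiX:
  assumes "X' \<union> X'' = X"
  shows "prod_set (restr_set \<Sigma> X') X' (PiX X'') X'' = {m \<in> PiX X. \<exists>\<tau>\<in>\<Sigma>. \<forall>v\<in>X'. m v = \<tau> v}"
proof -
  have "restr m X' \<in> restr_set \<Sigma> X' \<longleftrightarrow> (\<exists>\<tau>\<in>\<Sigma>. \<forall>v\<in>X'. m v = \<tau> v)" for m
    by (auto simp: restr_set_def image_iff restr_eq_iff)
  moreover have "restr m X'' \<in> PiX X''" for m by (simp add: restr_def PiX_def)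
  ultimately show ?thesis using assms by (auto simp: prod_set_def)
qed

theorem corollary3p3:
  fixes X X' X'' :: "'v set" and \<Sigma> :: "('v \<Rightarrow> bool) set" and T :: "'v form set"
  assumes "X' \<inter> X'' = {}" and "X' \<union> X'' = X"
    and "T \<subseteq> formulas X" and "\<Sigma> = models X T"
  shows "\<exists>T'. T' \<subseteq> formulas X \<and>
           prod_set (restr_set \<Sigma> X') X' (PiX X'') X'' = models X T'"
proof (intro exI conjI)
  show "valid_over \<Sigma> X' \<subseteq> formulas X"
    using assms(2) by (auto simp: valid_over_def formulas_def)
  show "prod_set (restr_set \<Sigma> X') X' (PiX X'') X'' = models X (valid_over \<Sigma> X')"
    using assms(2,4) by (simp add: prod_set_restr_set_PiX models_valid_over)
qed

end
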